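(* Consider the distributed detection model in the context, where the fusion center knows $(\alpha,P_{1,0},P_{0,1})$ and uses the optimal (MAP) fusion rule, and let $P_E^*(P_{1,0},P_{0,1})$ denote its resulting error probability. Then the attacking strategies $(P_{1,0}^*,P_{0,1}^* )\in[0,1]^2$ maximizing $P_E^*$ are as follows: if $\alpha>0.5$, any pair $(p_{1,0},p_{0,1})\in[0,1]^2$ satisfying $\alpha(p_{1,0}+p_{0,1})=1$ is optimal; if $\alpha\le 0.5$, $(P_{1,0}^*,P_{0,1}^* )=(1,1)$ is optimal.
   Context: Binary hypothesis test between $H_0$ and $H_1$ with priors $P_0,P_1\in(0,1)$, $P_0+P_1=1$. There are $N$ sensors, each using the same fixed local threshold, so that conditionally on the hypothesis their local decisions $v_i\in\{0,1\}$ are i.i.d. with $P(v_i=1\mid H_1)=P_d$, $P(v_i=1\mid H_0)=P_f$, where $0<P_f<P_d<1$. Each sensor independently is Byzantine with probability $\alpha\in[0,1]$. Honest nodes send $u_i=v_i$; a Byzantine node sends $u_i=1$ with probability $P_{1,0}$ when $v_i=0$ and sends $u_i=0$ with probability $P_{0,1}$ when $v_i=1$. Hence conditionally on $H_j$ the $u_i$ are i.i.d. with $P(u_i=1\mid H_0)=\pi_{1,0}=\alpha(P_{1,0}(1-P_f)+(1-P_{0,1})P_f)+(1-\alpha)P_f$ and $P(u_i=1\mid H_1)=\pi_{1,1}=\alpha(P_{1,0}(1-P_d)+(1-P_{0,1})P_d)+(1-\alpha)P_d$. The MAP fusion rule decides $H_1$ when $P(\mathbf u\mid H_1)/P(\mathbf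 u\mid H_0)>P_0/P_1$ and $H_0$ otherwise; it minimizes the error probability $P(\text{decide }H_1, H_0)+P(\text{decide }H_0,H_1)$ among all fusion rules based on $\mathbf u=(u_1,\dots,u_N)$, and this minimum is $P_E^*$. Equivalently, when $\pi_{1,1}>\pi_{1,0}$ it is the $K$-out-of-$N$ rule deciding $H_1$ iff the number of ones is at least $\left\lceil \ln\left[\frac{P_0}{P_1}\left(\frac{1-\pi_{1,0}}{1-\pi_{1,1}}\right)^{N}\right]\Big/\ln\left[\frac{\pi_{1,1}(1-\pi_{1,0})}{\pi_{1,0}(1-\pi_{1,1})}\right]\right\rceil$. *)

theory Defs
  imports Complex_Main
begin

text \<open>Probability that a transmitted decision equals 1 under H0 and under H1.\<close>
definition pi10 :: "real \<Rightarrow> real \<Rightarrow> real \<Rightarrow> real \<Rightarrow> real" where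
  "pi10 \<alpha> Pf p10 p01 = \<alpha> * (p10 * (1 - Pf) + (1 - p01) * Pf) + (1 - \<alpha>) * Pf"

definition pi11 :: "real \<Rightarrow> real \<Rightarrow> real \<Rightarrow> real \<Rightarrow> real" where
  "pi11 \<alpha> Pd p10 p01 = \<alpha> * (p10 * (1 - Pd) + (1 - p01) * Pd) + (1 - \<alpha>) * Pd"

text \<open>A received vector u in {0,1}^N is represented by the set S of indices i < N with u_i = 1.
  Conditional likelihood of u given that each u_i = 1 independently with probability q.\<close>
definition lik :: "nat \<Rightarrow> real \<Rightarrow> nat set \<Rightarrow> real" where
  "lik N q S = q ^ card S * (1 - q) ^ (N - card S)"

text \<open>MAP fusion rule: decide H1 iff P(u|H1)/P(u|H0) > P0/P1, written without division as
  P1 P(u|H1) > P0 P(u|H0).\<close>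
definition map_decides_H1 ::
  "real \<Rightarrow> real \<Rightarrow> nat \<Rightarrow> real \<Rightarrow> real \<Rightarrow> real \<Rightarrow> real \<Rightarrow> real \<Rightarrow> nat set \<Rightarrow> bool" where
  "map_decides_H1 P0 P1 N \<alpha> Pf Pd p10 p01 S \<longleftrightarrow>
     P1 * lik N (pi11 \<alpha> Pd p10 p01) S > P0 * lik N (pi10 \<alpha> Pf p10 p01) S"

definition PE_star ::
  "real \<Rightarrow> real \<Rightarrow> nat \<Rightarrow> real \<Rightarrow> real \<Rightarrow> real \<Rightarrow> real \<Rightarrow> real \<Rightarrow> real" where
  "PE_star P0 P1 N \<alpha> Pf Pd p10 p01 =
     (\<Sum>S\<in>Pow {..<N}.
        (if map_decides_H1 P0 P1 N \<alpha> Pf Pd p10 p01 S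
         then P0 * lik N (pi10 \<alpha> Pf p10 p01) S
         else P1 * lik N (pi11 \<alpha> Pd p10 p01) S))"

end

theory Submission
  imports Defs
begin

text \<open>The MAP error probability of N i.i.d. binary reports depends on the attack only through
  the pair (pi10, pi11) of report probabilities, and it can only grow when the reports are passed
  through a further binary channel (a garbling), by concavity of the minimum. If alpha > 1/2,
  an attack with alpha (p10 + p01) = 1 makes pi10 = pi11, so the reports are independent of the
  hypothesis, and such uninformative reports are a garbling of any others. If alpha \<le> 1/2,
  the report probabilities of the attack (1,1) are obtained from those of any other attack by
  one and the same garbling under both hypotheses.\<close>

text \<open>Minimal error of deciding between weights A, B from n i.i.d. Bernoulli samples with
  success probability a resp. b, computed by conditioning on the last sample.\<close>
fun bayes_error :: "nat \<Rightarrow> real \<Rightarrow> real \<Rightarrow> real \<Rightarrow> real \<Rightarrow> real" where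
  "bayes_error 0 A B a b = min A B"
| "bayes_error (Suc n) A B a b =
     bayes_error n (A * a) (B * b) a b + bayes_error n (A * (1 - a)) (B * (1 - b)) a b"

lemma bayes_error_concave:
  assumes "0 \<le> x" "0 \<le> y"
  shows "x * bayes_error n u1 u2 a b + y * bayes_error n v1 v2 a b
           \<le> bayes_error n (x * u1 + y * v1) (x * u2 + y * v2) a b"
  using assms
proof (induction n arbitrary: u1 u2 v1 v2)
  case 0
  have "x * min u1 u2 \<le> x * u1" "x * min u1 u2 \<le> x * u2"
       "y * min v1 v2 \<le> y * v1" "y * min v1 v2 \<le> y * v2"
    using 0 by (auto intro: mult_left_mono)
  then show ?case by simp
next
  case (Suc n)
  have distr: "(x * u1 + y * v1) * a = x * (u1 * a) + y * (v1 * a)"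
    "(x * u2 + y * v2) * b = x * (u2 * b) + y * (v2 * b)"
    "(x * u1 + y * v1) * (1 - a) = x * (u1 * (1 - a)) + y * (v1 * (1 - a))"
    "(x * u2 + y * v2) * (1 - b) = x * (u2 * (1 - b)) + y * (v2 * (1 - b))"
    by (simp_all add: algebra_simps)
  show ?case
    using Suc.IH[OF Suc.prems, of "u1 * a" "u2 * b" "v1 * a" "v2 * b"]
          Suc.IH[OF Suc.prems, of "u1 * (1 - a)" "u2 * (1 - b)" "v1 * (1 - a)" "v2 * (1 - b)"]
    by (simp only: bayes_error.simps distr) (simp add: algebra_simps)
qed

text \<open>A sample with success probability a is relayed as 1 with probability y + s if it is 1
  and with probability y if it is 0.\<close>
lemma bayes_error_garbling_mono:
  assumes "0 \<le> y" "0 \<le> s" "y + s \<le> 1"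
  shows "bayes_error n A B a b \<le> bayes_error n A B (y + s * a) (y + s * b)"
proof (induction n arbitrary: A B)
  case 0
  then show ?case by simp
next
  case (Suc n)
  let ?a = "y + s * a" and ?b = "y + s * b"
  let ?e1 = "bayes_error n (A * a) (B * b) a b"
    and ?e0 = "bayes_error n (A * (1 - a)) (B * (1 - b)) a b"
  have relay1: "(y + s) * ?e1 + y * ?e0 \<le> bayes_error n (A * ?a) (B * ?b) a b"
  proof -
    have "(y + s) * ?e1 + y * ?e0
        \<le> bayes_error n ((y + s) * (A * a) + y * (A * (1 - a)))
                         ((y + s) * (B * b) + y * (B * (1 - b))) a b"
      by (rule bayes_error_concave) (use assms in auto)
    then show ?thesis by (simp add: algebra_simps)
  qed
  have relay0: "(1 - (y + s)) * ?e1 + (1 - y) * ?e0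
      \<le> bayes_error n (A * (1 - ?a)) (B * (1 - ?b)) a b"
  proof -
    have "(1 - (y + s)) * ?e1 + (1 - y) * ?e0
        \<le> bayes_error n ((1 - (y + s)) * (A * a) + (1 - y) * (A * (1 - a)))
                         ((1 - (y + s)) * (B * b) + (1 - y) * (B * (1 - b))) a b"
      by (rule bayes_error_concave) (use assms in auto)
    then show ?thesis by (simp add: algebra_simps)
  qed
  have "bayes_error (Suc n) A B a b
      = ((y + s) * ?e1 + y * ?e0) + ((1 - (y + s)) * ?e1 + (1 - y) * ?e0)"
    by (simp add: algebra_simps)
  also have "\<dots> \<le> bayes_error n (A * ?a) (B * ?b) a b
                 + bayes_error n (A * (1 - ?a)) (B * (1 - ?b)) a b"
    using relay1 relay0 by linarith
  also have "\<dots> \<le> bayes_error (Suc n) A B ?a ?b"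
    using Suc.IH[of "A * ?a" "B * ?b"] Suc.IH[of "A * (1 - ?a)" "B * (1 - ?b)"] by simp
  finally show ?case .
qed

lemma bayes_error_le_uninformative:
  assumes "0 \<le> c" "c \<le> 1"
  shows "bayes_error n A B a b \<le> bayes_error n A B c c"
  using bayes_error_garbling_mono[of c 0 n A B a b] assms by simp

lemma sum_Pow_lessThan_Suc:
  "(\<Sum>S\<in>Pow {..<Suc n}. f S) = (\<Sum>S\<in>Pow {..<n}. f S) + (\<Sum>S\<in>Pow {..<n}. f (insert n S))"
proof -
  have "Pow {..<Suc n} = Pow {..<n} \<union> insert n ` Pow {..<n}"
    by (simp add: lessThan_Suc Pow_insert)
  moreover have "Pow {..<n} \<inter> insert n ` Pow {..<n} = {}" by auto
  moreover have "inj_on (insert n) (Pow {..<n})"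
    unfolding inj_on_def by (metis Pow_iff insert_ident lessThan_iff less_irrefl subsetD)
  ultimately show ?thesis
    by (simp add: sum.union_disjoint sum.reindex)
qed

lemma bayes_error_eq_sum:
  "bayes_error n A B a b = (\<Sum>S\<in>Pow {..<n}. min (A * lik n a S) (B * lik n b S))"
proof (induction n arbitrary: A B)
  case 0
  then show ?case by (simp add: lik_def)
next
  case (Suc n)
  have lik_Suc: "lik (Suc n) q S = (1 - q) * lik n q S" if "S \<in> Pow {..<n}" for q S
  proof -
    have "card S \<le> n" using that by (metis PowD card_lessThan card_mono finite_lessThan)
    then show ?thesis by (simp add: lik_def Suc_diff_le)
  qed
  have lik_Suc_insert: "lik (Suc n) q (insert n S) = q * lik n q S" if "S \<in> Pow {..<n}" for q S
  proof -
    have "finite S" "n \<notin> S" using that finite_subset by auto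
    then show ?thesis by (simp add: lik_def)
  qed
  show ?case
    unfolding sum_Pow_lessThan_Suc bayes_error.simps Suc.IH
    by (simp add: lik_Suc lik_Suc_insert mult.assoc mult.left_commute add.commute)
qed

lemma PE_star_eq_bayes_error:
  "PE_star P0 P1 N \<alpha> Pf Pd p10 p01 = bayes_error N P0 P1 (pi10 \<alpha> Pf p10 p01) (pi11 \<alpha> Pd p10 p01)"
  unfolding bayes_error_eq_sum PE_star_def map_decides_H1_def
  by (rule sum.cong) auto

lemma pi11_eq_pi10: "pi11 = pi10"
  by (simp add: fun_eq_iff pi10_def pi11_def)

lemma pi10_eq: "pi10 \<alpha> P p10 p01 = \<alpha> * p10 + (1 - \<alpha> * (p10 + p01)) * P"
  by (simp add: pi10_def algebra_simps)

lemma pi10_bounds: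
  assumes "\<alpha> \<in> {0..1}" "P \<in> {0..1}" "p10 \<in> {0..1}" "p01 \<in> {0..1}"
  shows "0 \<le> pi10 \<alpha> P p10 p01" "pi10 \<alpha> P p10 p01 \<le> 1"
proof -
  have "p10 * (1 - P) + (1 - p01) * P \<le> 1 * (1 - P) + 1 * P"
    using assms by (intro add_mono mult_right_mono) auto
  then have "\<alpha> * (p10 * (1 - P) + (1 - p01) * P) + (1 - \<alpha>) * P \<le> \<alpha> * 1 + (1 - \<alpha>) * 1"
    using assms by (intro add_mono mult_left_mono) auto
  then show "pi10 \<alpha> P p10 p01 \<le> 1" by (simp add: pi10_def)
  show "0 \<le> pi10 \<alpha> P p10 p01"
    using assms by (simp add: pi10_def)
qed

lemma pi10_1_1_is_garbling:
  assumes "0 \<le> \<alpha>" "\<alpha> \<le> 1/2" "q10 \<in> {0..1}" "q01 \<in> {0..1}"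
  obtains y s where "0 \<le> y" "0 \<le> s" "y + s \<le> 1"
    "\<And>P. y + s * pi10 \<alpha> P q10 q01 = pi10 \<alpha> P 1 1"
proof -
  define t where "t = 1 - \<alpha> * (q10 + q01)"
  define t0 where "t0 = 1 - 2 * \<alpha>"
  have "\<alpha> * (q10 + q01) \<le> \<alpha> * 2" using assms by (intro mult_left_mono) auto
  then have t0_le_t: "t0 \<le> t" by (simp add: t_def t0_def)
  have "0 \<le> t0" using assms by (simp add: t0_def)
  show thesis
  proof (cases "t = 0")
    case True
    then have "\<alpha> = 1/2" using \<open>0 \<le> t0\<close> t0_le_t by (simp add: t0_def)
    then have "pi10 \<alpha> P 1 1 = 1/2" for P by (simp add: pi10_eq)
    then show thesis
      using that[of "1/2" 0] by simp
  next
    case False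
    then have "0 < t" using \<open>0 \<le> t0\<close> t0_le_t by simp
    define s where "s = t0 / t"
    define y where "y = \<alpha> * (1 - s * q10)"
    have "t0 * q10 \<le> t * 1" using assms \<open>0 \<le> t0\<close> t0_le_t by (intro mult_mono) auto
    then have "s * q10 \<le> 1" using \<open>0 < t\<close> by (simp add: s_def divide_le_eq)
    then have "0 \<le> y" using assms by (simp add: y_def)
    moreover have "0 \<le> s" using \<open>0 \<le> t0\<close> \<open>0 < t\<close> by (simp add: s_def)
    moreover have "y + s \<le> 1"
    proof -
      have "\<alpha> * q10 + (1 - \<alpha>) * q01 \<le> \<alpha> * 1 + (1 - \<alpha>) * 1"
        using assms by (intro add_mono mult_left_mono) auto
      then have "0 \<le> \<alpha> * (1 - \<alpha> * q10 - (1 - \<alpha>) * q01)"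
        using assms by simp
      then have "\<alpha> * t - \<alpha> * t0 * q10 + t0 \<le> t"
        using assms by (simp add: t_def t0_def algebra_simps)
      moreover have "(y + s) * t = \<alpha> * t - \<alpha> * t0 * q10 + t0"
        using \<open>0 < t\<close> by (simp add: y_def s_def field_simps)
      ultimately have "(y + s) * t \<le> 1 * t" by simp
      then show ?thesis using \<open>0 < t\<close> by (simp add: mult_le_cancel_right)
    qed
    moreover have "y + s * pi10 \<alpha> P q10 q01 = pi10 \<alpha> P 1 1" for P
    proof -
      have "s * t = t0" using \<open>0 < t\<close> by (simp add: s_def)
      then have "y + s * (\<alpha> * q10 + t * P) = \<alpha> + t0 * P"
        by (simp add: y_def algebra_simps)
      then show ?thesis by (simp add: pi10_eq t_def t0_def algebra_simps)
    qed
    ultimately show thesis using that by blast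
  qed
qed

theorem theorem3:
  fixes P0 P1 \<alpha> Pf Pd :: real and N :: nat
  assumes "0 < P0" "0 < P1" "P0 + P1 = 1"
    and "0 < Pf" "Pf < Pd" "Pd < 1"
    and "0 \<le> \<alpha>" "\<alpha> \<le> 1"
  shows "(\<alpha> > 1/2 \<longrightarrow>
            (\<forall>p10 p01. p10 \<in> {0..1} \<and> p01 \<in> {0..1} \<and> \<alpha> * (p10 + p01) = 1 \<longrightarrow>
               (\<forall>q10 \<in> {0..1}. \<forall>q01 \<in> {0..1}.
                  PE_star P0 P1 N \<alpha> Pf Pd q10 q01 \<le> PE_star P0 P1 N \<alpha> Pf Pd p10 p01)))
       \<and> (\<alpha> \<le> 1/2 \<longrightarrow>
            (\<forall>q10 \<in> {0..1}. \<forall>q01 \<in> {0..1}.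
               PE_star P0 P1 N \<alpha> Pf Pd q10 q01 \<le> PE_star P0 P1 N \<alpha> Pf Pd 1 1))"
proof (intro conjI impI ballI allI)
  fix p10 p01 q10 q01 :: real
  assume p: "p10 \<in> {0..1} \<and> p01 \<in> {0..1} \<and> \<alpha> * (p10 + p01) = 1"
  have uninformative: "pi10 \<alpha> Pd p10 p01 = pi10 \<alpha> Pf p10 p01"
    using p by (simp add: pi10_eq)
  have "0 \<le> pi10 \<alpha> Pf p10 p01" "pi10 \<alpha> Pf p10 p01 \<le> 1"
    using pi10_bounds p assms by auto
  then show "PE_star P0 P1 N \<alpha> Pf Pd q10 q01 \<le> PE_star P0 P1 N \<alpha> Pf Pd p10 p01"
    unfolding PE_star_eq_bayes_error pi11_eq_pi10 uninformative
    by (rule bayes_error_le_uninformative)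
next
  fix q10 q01 :: real
  assume "\<alpha> \<le> 1/2" "q10 \<in> {0..1}" "q01 \<in> {0..1}"
  then obtain y s where relay: "0 \<le> y" "0 \<le> s" "y + s \<le> 1"
    and garble: "\<And>P. y + s * pi10 \<alpha> P q10 q01 = pi10 \<alpha> P 1 1"
    using pi10_1_1_is_garbling assms by blast
  show "PE_star P0 P1 N \<alpha> Pf Pd q10 q01 \<le> PE_star P0 P1 N \<alpha> Pf Pd 1 1"
    unfolding PE_star_eq_bayes_error pi11_eq_pi10 garble[symmetric]
    using relay by (rule bayes_error_garbling_mono)
qed

end
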